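(* Let $Q$ be a quiver whose underlying graph is a Dynkin diagram of type $A$, $D$ or $E$, with vertex set $I$. Let $A=\Pi_Q$ be its preprojective algebra over $\mathbb{C}$, graded by path length. Let $\theta_0\in HH^1(A)$ be the class of the derivation $D:A\to A$ determined by $D(e_i)=0$ for $i\in I$, $D(a)=0$ for $a\in Q$, and $D(a^* )=a^*$ for $a^*\in Q^*$. Equivalently, $D(b)=s(b)\,b$ for every path $b$, where $s(b)$ is the number of arrows of $b$ that lie in $Q^*$. Then for every $i\ge 0$ and every homogeneous $x\in HH_i(A)$ of degree $\deg(x)$, the Lie derivative satisfies $$\mathcal{L}_{\theta_0}(x)=\frac{\deg(x)}{2}\,x .$$
   Context: Let $Q$ be a quiver. Its double $\bar Q=Q\cup Q^*$ is obtained by adjoining, for each arrow $a\in Q$, a reversed arrow $a^*$. The path algebra $\mathbb{C}\bar Q$ has as basis all paths in $\bar Q$, including the trivial paths $e_i$ for $i\in I$. The product of two paths is their concatenation when they are compatible, and $0$ otherwise. The preprojective algebra is $\Pi_Q=\mathbb{C}\bar Q/\big(\sum_{a\in Q}(aa^*-a^*a)\big)$. It is graded by path length, with arrows in degree $1$. For $Q$ of ADE type it is finite dimensional. The defining relation is homogeneous in the number of $Q^*$-arrows, so $D$ is a well-defined derivation. $HH^\bullet(A)$ and $HH_\bullet(A)$ denote Hochschild cohomology and Hochschild homology of $A$ with coefficients in $A$. $HH_\bullet(A)$ carries the internal grading induced from the grading of $A$: a chain $a_0\otimes a_1\otimes\cdots\otimes a_n$ of homogeneous elements has degree $\sum_j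 \deg a_j$. For a derivation $D$ (a Hochschild $1$-cocycle), the Lie derivative acts on Hochschild chains by $\mathcal{L}_D(a_0\otimes\cdots\otimes a_n)=\sum_{j=0}^n a_0\otimes\cdots\otimes D(a_j)\otimes\cdots\otimes a_n$. This induces the action $\mathcal{L}_{\theta_0}$ on $HH_\bullet(A)$, which is part of the standard calculus structure (Daletski–Gelfand–Tsygan) on the pair $(HH^\bullet(A),HH_\bullet(A))$. *)

theory Defs
  imports Complex_Main
begin

datatype dynkin_type = TypeA | TypeD | TypeE

definition dynkin_ok :: "dynkin_type \<Rightarrow> nat \<Rightarrow> bool" where
  "dynkin_ok T n = (case T of TypeA \<Rightarrow> n \<ge> 1 | TypeD \<Rightarrow> n \<ge> 4 | TypeE \<Rightarrow> n \<in> {6,7,8})"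

definition path_edges :: "nat \<Rightarrow> nat set set" where
  "path_edges m = {{i, Suc i} | i. Suc i < m}"

definition dynkin_edges :: "dynkin_type \<Rightarrow> nat \<Rightarrow> nat set set" where
  "dynkin_edges T n = (case T of
      TypeA \<Rightarrow> path_edges n
    | TypeD \<Rightarrow> path_edges (n - 1) \<union> {{n - 3, n - 1}}
    | TypeE \<Rightarrow> path_edges (n - 1) \<union> {{2, n - 1}})"

definition dynkin_quiver :: "'v set \<Rightarrow> 'a set \<Rightarrow> ('a \<Rightarrow> 'v) \<Rightarrow> ('a \<Rightarrow> 'v) \<Rightarrow> bool" where
  "dynkin_quiver I Arr src tgt \<longleftrightarrow>
     (\<forall>a\<in>Arr. src a \<in> I \<and> tgt a \<in> I) \<and>
     (\<exists>T n \<phi>. dynkin_ok T n \<and> bij_betw \<phi> I {..<n} \<and>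
        bij_betw (\<lambda>a. {\<phi> (src a), \<phi> (tgt a)}) Arr (dynkin_edges T n))"

text \<open>Arrows of the double quiver: (a, False) is a, (a, True) is a*.
  A path is (v, xs): start vertex v followed by the arrows xs, read left to right;
  (v, []) is the trivial path e_v.\<close>
type_synonym ('v, 'a) path = "'v \<times> ('a \<times> bool) list"

definition dsrc :: "('a \<Rightarrow> 'v) \<Rightarrow> ('a \<Rightarrow> 'v) \<Rightarrow> 'a \<times> bool \<Rightarrow> 'v" where
  "dsrc src tgt x = (if snd x then tgt (fst x) else src (fst x))"

definition dtgt :: "('a \<Rightarrow> 'v) \<Rightarrow> ('a \<Rightarrow> 'v) \<Rightarrow> 'a \<times> bool \<Rightarrow> 'v" where
  "dtgt src tgt x = (if snd x then src (fst x) else tgt (fst x))"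

fun walk :: "('a \<Rightarrow> 'v) \<Rightarrow> ('a \<Rightarrow> 'v) \<Rightarrow> 'v \<Rightarrow> ('a \<times> bool) list \<Rightarrow> bool" where
  "walk src tgt v [] = True"
| "walk src tgt v (x # xs) = (dsrc src tgt x = v \<and> walk src tgt (dtgt src tgt x) xs)"

definition valid_path :: "'v set \<Rightarrow> 'a set \<Rightarrow> ('a \<Rightarrow> 'v) \<Rightarrow> ('a \<Rightarrow> 'v) \<Rightarrow> ('v, 'a) path \<Rightarrow> bool" where
  "valid_path I Arr src tgt p \<longleftrightarrow>
     fst p \<in> I \<and> (\<forall>x\<in>set (snd p). fst x \<in> Arr) \<and> walk src tgt (fst p) (snd p)"

definition endv :: "('a \<Rightarrow> 'v) \<Rightarrow> ('a \<Rightarrow> 'v) \<Rightarrow> ('v, 'a) path \<Rightarrow> 'v" where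
  "endv src tgt p = (if snd p = [] then fst p else dtgt src tgt (last (snd p)))"

text \<open>Product of two paths: concatenation if compatible, otherwise zero (None).\<close>
definition pcat :: "('a \<Rightarrow> 'v) \<Rightarrow> ('a \<Rightarrow> 'v) \<Rightarrow> ('v, 'a) path \<Rightarrow> ('v, 'a) path \<Rightarrow> ('v, 'a) path option" where
  "pcat src tgt p q = (if endv src tgt p = fst q then Some (fst p, snd p @ snd q) else None)"

definition pcat3 :: "('a \<Rightarrow> 'v) \<Rightarrow> ('a \<Rightarrow> 'v) \<Rightarrow> ('v, 'a) path \<Rightarrow> ('v, 'a) path \<Rightarrow> ('v, 'a) path
    \<Rightarrow> ('v, 'a) path option" where
  "pcat3 src tgt p m q = Option.bind (pcat src tgt p m) (\<lambda>pm. pcat src tgt pm q)"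

text \<open>Chains in (C Qbar)^{\<otimes>(n+1)}: finitely supported complex functions on
  (n+1)-tuples (lists) of paths of the double quiver.  The Hochschild chain group
  C_n(Pi_Q) = Pi_Q^{\<otimes>(n+1)} is the quotient of this by the subspace
  rel_span n (tensors with one slot in the ideal J generated by rho).\<close>
type_synonym ('v, 'a) chain = "('v, 'a) path list \<Rightarrow> complex"

definition is_chain :: "'v set \<Rightarrow> 'a set \<Rightarrow> ('a \<Rightarrow> 'v) \<Rightarrow> ('a \<Rightarrow> 'v) \<Rightarrow> nat \<Rightarrow> ('v, 'a) chain \<Rightarrow> bool" where
  "is_chain I Arr src tgt n z \<longleftrightarrow> finite {t. z t \<noteq> 0} \<and>
     (\<forall>t. z t \<noteq> 0 \<longrightarrow> length t = Suc n \<and> (\<forall>p\<in>set t. valid_path I Arr src tgt p))"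

definition in_span :: "('v, 'a) chain set \<Rightarrow> ('v, 'a) chain \<Rightarrow> bool" where
  "in_span G x \<longleftrightarrow> (\<exists>S c. finite S \<and> S \<subseteq> G \<and> x = (\<lambda>u. \<Sum>g\<in>S. c g * g u))"

text \<open>Generator of the relation subspace: the tuple t with slot j replaced by
  p * rho * q, where rho = sum over a of (a a* - a* a).\<close>
definition rel_gen :: "'a set \<Rightarrow> ('a \<Rightarrow> 'v) \<Rightarrow> ('a \<Rightarrow> 'v) \<Rightarrow> ('v, 'a) path list \<Rightarrow> nat
    \<Rightarrow> ('v, 'a) path \<Rightarrow> ('v, 'a) path \<Rightarrow> ('v, 'a) chain" where
  "rel_gen Arr src tgt t j p q = (\<lambda>u. \<Sum>a\<in>Arr.
      (case pcat3 src tgt p (src a, [(a, False), (a, True)]) q of None \<Rightarrow> 0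
         | Some r \<Rightarrow> if u = t[j := r] then 1 else 0)
    - (case pcat3 src tgt p (tgt a, [(a, True), (a, False)]) q of None \<Rightarrow> 0
         | Some r \<Rightarrow> if u = t[j := r] then 1 else 0))"

definition rel_span :: "'v set \<Rightarrow> 'a set \<Rightarrow> ('a \<Rightarrow> 'v) \<Rightarrow> ('a \<Rightarrow> 'v) \<Rightarrow> nat \<Rightarrow> ('v, 'a) chain set" where
  "rel_span I Arr src tgt n = {rel_gen Arr src tgt t j p q | t j p q.
      length t = Suc n \<and> j \<le> n \<and> (\<forall>x\<in>set t. valid_path I Arr src tgt x) \<and>
      valid_path I Arr src tgt p \<and> valid_path I Arr src tgt q}"

definition bterm :: "('a \<Rightarrow> 'v) \<Rightarrow> ('a \<Rightarrow> 'v) \<Rightarrow> ('v, 'a) path list \<Rightarrow> ('v, 'a) chain" where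
  "bterm src tgt t = (\<lambda>u.
      (\<Sum>j<length t - 1. (case pcat src tgt (t ! j) (t ! Suc j) of None \<Rightarrow> 0
          | Some r \<Rightarrow> if u = take j t @ r # drop (Suc (Suc j)) t then (-1) ^ j else 0))
    + (if 2 \<le> length t then (case pcat src tgt (last t) (hd t) of None \<Rightarrow> 0
          | Some r \<Rightarrow> if u = r # butlast (tl t) then (-1) ^ (length t - 1) else 0) else 0))"

definition hbnd :: "('a \<Rightarrow> 'v) \<Rightarrow> ('a \<Rightarrow> 'v) \<Rightarrow> ('v, 'a) chain \<Rightarrow> ('v, 'a) chain" where
  "hbnd src tgt z = (\<lambda>u. \<Sum>t\<in>{t. z t \<noteq> 0}. z t * bterm src tgt t u)"

definition tdeg :: "('v, 'a) path list \<Rightarrow> nat" where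
  "tdeg t = (\<Sum>p\<leftarrow>t. length (snd p))"

definition star_count :: "('v, 'a) path list \<Rightarrow> nat" where
  "star_count t = (\<Sum>p\<leftarrow>t. length (filter snd (snd p)))"

definition homog :: "nat \<Rightarrow> ('v, 'a) chain \<Rightarrow> bool" where
  "homog d z \<longleftrightarrow> (\<forall>t. z t \<noteq> 0 \<longrightarrow> tdeg t = d)"

definition lie_D :: "('v, 'a) chain \<Rightarrow> ('v, 'a) chain" where
  "lie_D z = (\<lambda>t. of_nat (star_count t) * z t)"

end

theory Submission
  imports Defs
begin

text \<open>Since a Dynkin diagram is a tree, there is a potential c on the vertices with
  c (tgt a) = c (src a) + 1/2 for every arrow a.  For a path b from i to j this gives
  s(b) - |b|/2 = c i - c j, so D - deg/2 is the inner derivation [c, -] of c = \<Sum> c v e_v.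
  The Lie derivative of an inner derivation is null-homotopic on Hochschild chains: the map H
  inserting c with alternating signs satisfies b H + H b = L_{[c,-]}.  Since H sends relation
  tensors to relation tensors, for a cycle z modulo relations L_D z - deg/2 z = b (H z) + H (b z)
  with H (b z) a relation tensor.\<close>

definition unit_vec :: "'x \<Rightarrow> 'x \<Rightarrow> complex" where
  "unit_vec t u = (if u = t then 1 else 0)"

definition fin_supp :: "('x \<Rightarrow> complex) \<Rightarrow> bool" where
  "fin_supp z \<longleftrightarrow> finite {t. z t \<noteq> 0}"

definition lin_ext :: "('x \<Rightarrow> 'y \<Rightarrow> complex) \<Rightarrow> ('x \<Rightarrow> complex) \<Rightarrow> 'y \<Rightarrow> complex" where
  "lin_ext F z u = (\<Sum>t\<in>{t. z t \<noteq> 0}. z t * F t u)"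

lemma hbnd_eq_lin_ext: "hbnd src tgt = lin_ext (bterm src tgt)"
  by (intro ext) (simp add: hbnd_def lin_ext_def)

lemma fin_supp_unit_vec: "fin_supp (unit_vec t)"
  unfolding fin_supp_def unit_vec_def by simp

lemma fin_supp_scale: "fin_supp f \<Longrightarrow> fin_supp (\<lambda>t. a * f t)"
  unfolding fin_supp_def by (rule finite_subset[rotated]) auto

lemma fin_supp_diff: "fin_supp f \<Longrightarrow> fin_supp g \<Longrightarrow> fin_supp (\<lambda>t. f t - g t)"
  unfolding fin_supp_def by (rule finite_subset[of _ "{t. f t \<noteq> 0} \<union> {t. g t \<noteq> 0}"]) auto

lemma fin_supp_sum:
  assumes "finite B" "\<And>b. b \<in> B \<Longrightarrow> fin_supp (f b)"
  shows "fin_supp (\<lambda>t. \<Sum>b\<in>B. f b t)"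
proof -
  have "{t. (\<Sum>b\<in>B. f b t) \<noteq> 0} \<subseteq> (\<Union>b\<in>B. {t. f b t \<noteq> 0})"
    by (auto intro: ccontr simp: sum.neutral)
  moreover have "finite (\<Union>b\<in>B. {t. f b t \<noteq> 0})"
    using assms by (auto simp: fin_supp_def)
  ultimately show ?thesis unfolding fin_supp_def by (rule finite_subset)
qed

lemma lin_ext_superset:
  assumes "finite X" "{t. z t \<noteq> 0} \<subseteq> X"
  shows "lin_ext F z u = (\<Sum>t\<in>X. z t * F t u)"
  unfolding lin_ext_def by (rule sum.mono_neutral_left[OF assms]) auto

lemma lin_ext_zero: "lin_ext F (\<lambda>_. 0) u = 0"
  unfolding lin_ext_def by simp

lemma lin_ext_unit_vec: "lin_ext F (unit_vec t) u = F t u"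
  by (subst lin_ext_superset[of "{t}"]) (auto simp: unit_vec_def)

lemma lin_ext_scale: "lin_ext F (\<lambda>t. a * f t) u = a * lin_ext F f u"
  by (cases "a = 0") (simp_all add: lin_ext_def sum_distrib_left mult.assoc)

lemma lin_ext_diff:
  assumes "fin_supp f" "fin_supp g"
  shows "lin_ext F (\<lambda>t. f t - g t) u = lin_ext F f u - lin_ext F g u"
proof -
  define X where "X = {t. f t \<noteq> 0} \<union> {t. g t \<noteq> 0}"
  have X: "finite X" using assms by (simp add: X_def fin_supp_def)
  have "lin_ext F (\<lambda>t. f t - g t) u = (\<Sum>t\<in>X. f t * F t u) - (\<Sum>t\<in>X. g t * F t u)"
    by (subst lin_ext_superset[OF X]) (auto simp: X_def left_diff_distrib sum_subtractf)
  also have "\<dots> = lin_ext F f u - lin_ext F g u"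
    by (subst (1 2) lin_ext_superset[OF X]) (auto simp: X_def)
  finally show ?thesis .
qed

lemma lin_ext_sum:
  assumes "finite B" "\<And>b. b \<in> B \<Longrightarrow> fin_supp (f b)"
  shows "lin_ext F (\<lambda>t. \<Sum>b\<in>B. f b t) u = (\<Sum>b\<in>B. lin_ext F (f b) u)"
proof -
  define X where "X = (\<Union>b\<in>B. {t. f b t \<noteq> 0})"
  have X: "finite X" using assms by (auto simp: fin_supp_def X_def)
  have "lin_ext F (\<lambda>t. \<Sum>b\<in>B. f b t) u = (\<Sum>t\<in>X. (\<Sum>b\<in>B. f b t) * F t u)"
    by (rule lin_ext_superset[OF X]) (auto intro: ccontr simp: X_def sum.neutral)
  also have "\<dots> = (\<Sum>b\<in>B. \<Sum>t\<in>X. f b t * F t u)"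
    by (simp add: sum_distrib_right sum.swap[of _ X])
  also have "\<dots> = (\<Sum>b\<in>B. lin_ext F (f b) u)"
    by (rule sum.cong[OF refl]) (subst lin_ext_superset[OF X], auto simp: X_def)
  finally show ?thesis .
qed

lemma lin_ext_sum_unit_vec:
  assumes "finite B"
  shows "lin_ext F (\<lambda>t. \<Sum>b\<in>B. a b * unit_vec (g b) t) u = (\<Sum>b\<in>B. a b * F (g b) u)"
  by (subst lin_ext_sum[OF assms]) (simp_all add: fin_supp_scale fin_supp_unit_vec lin_ext_scale lin_ext_unit_vec)

lemma in_span_zero: "in_span G (\<lambda>_. 0)"
  unfolding in_span_def by (rule exI[of _ "{}"]) auto

lemma in_span_gen: "g \<in> G \<Longrightarrow> in_span G g"
  unfolding in_span_def by (rule exI[of _ "{g}"], rule exI[of _ "\<lambda>_. 1"]) auto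

lemma in_span_scale_add:
  assumes "in_span G x" "in_span G y"
  shows "in_span G (\<lambda>u. a * x u + y u)"
proof -
  obtain S1 c1 where 1: "finite S1" "S1 \<subseteq> G" "x = (\<lambda>u. \<Sum>g\<in>S1. c1 g * g u)"
    using assms(1) unfolding in_span_def by blast
  obtain S2 c2 where 2: "finite S2" "S2 \<subseteq> G" "y = (\<lambda>u. \<Sum>g\<in>S2. c2 g * g u)"
    using assms(2) unfolding in_span_def by blast
  define c where "c g = a * (if g \<in> S1 then c1 g else 0) + (if g \<in> S2 then c2 g else 0)" for g
  have "a * x u + y u = (\<Sum>g\<in>S1 \<union> S2. c g * g u)" for u
  proof -
    have "(\<Sum>g\<in>S1 \<union> S2. c g * g u) = a * (\<Sum>g\<in>S1 \<union> S2. (if g \<in> S1 then c1 g else 0) * g u)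
        + (\<Sum>g\<in>S1 \<union> S2. (if g \<in> S2 then c2 g else 0) * g u)"
      by (simp add: c_def distrib_right sum.distrib sum_distrib_left mult.assoc)
    also have "(\<Sum>g\<in>S1 \<union> S2. (if g \<in> S1 then c1 g else 0) * g u) = (\<Sum>g\<in>S1. c1 g * g u)"
      by (rule sum.mono_neutral_cong_right) (use 1 2 in auto)
    also have "(\<Sum>g\<in>S1 \<union> S2. (if g \<in> S2 then c2 g else 0) * g u) = (\<Sum>g\<in>S2. c2 g * g u)"
      by (rule sum.mono_neutral_cong_right) (use 1 2 in auto)
    finally show ?thesis using 1 2 by simp
  qed
  then show ?thesis unfolding in_span_def using 1 2 by blast
qed

lemma in_span_sum:
  assumes "finite B" "\<And>b. b \<in> B \<Longrightarrow> in_span G (f b)"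
  shows "in_span G (\<lambda>u. \<Sum>b\<in>B. a b * f b u)"
  using assms
proof (induction B rule: finite_induct)
  case empty then show ?case by (simp add: in_span_zero)
next
  case (insert b B)
  then show ?case using in_span_scale_add[of G "f b" "\<lambda>u. \<Sum>b\<in>B. a b * f b u" "a b"] by simp
qed

section \<open>A potential on Dynkin quivers\<close>

text \<open>ori orients the edges: the edge e points away from its endpoint ori e.\<close>
lemma path_with_pendant_potential:
  fixes ori :: "nat set \<Rightarrow> nat"
  assumes X: "X = {} \<or> (X = {{k, m}} \<and> k < m)"
  shows "\<exists>g :: nat \<Rightarrow> complex. \<forall>i j. {i, j} \<in> path_edges m \<union> X \<longrightarrow> ori {i, j} = i \<longrightarrow> g j = g i + 1/2"
proof -
  define step where "step i e = (if ori e = i then 1/2 else - 1/2 :: complex)" for i e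
  define f where "f = rec_nat 0 (\<lambda>i r. r + step i {i, Suc i})"
  have f_Suc: "f (Suc i) = f i + step i {i, Suc i}" for i by (simp add: f_def)
  define g where "g x = (if X \<noteq> {} \<and> x = m then f k + step k {k, m} else f x)" for x
  have "g j = g i + 1/2" if e: "{i, j} \<in> path_edges m \<union> X" and o: "ori {i, j} = i" for i j
  proof -
    consider l where "{i, j} = {l, Suc l}" "Suc l < m" | "X \<noteq> {}" "{i, j} = {k, m}" "k < m"
      using e X unfolding path_edges_def by auto
    then show ?thesis
    proof cases
      case (1 l)
      then consider "i = l" "j = Suc l" | "i = Suc l" "j = l" by (auto simp: doubleton_eq_iff)
      then show ?thesis
        using 1 o by cases (auto simp: g_def f_Suc step_def insert_commute)
    next
      case 2
      then consider "i = k" "j = m" | "i = m" "j = k" by (auto simp: doubleton_eq_iff)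
      then show ?thesis
        using 2 o by cases (auto simp: g_def step_def insert_commute)
    qed
  qed
  then show ?thesis by blast
qed

lemma dynkin_edges_shape:
  assumes "dynkin_ok T n"
  shows "\<exists>m X k. dynkin_edges T n = path_edges m \<union> X \<and> (X = {} \<or> (X = {{k, m}} \<and> k < m))"
proof (cases T)
  case TypeA
  then show ?thesis by (auto simp: dynkin_edges_def)
next
  case TypeD
  then have "dynkin_edges T n = path_edges (n - 1) \<union> {{n - 3, n - 1}}" "n - 3 < n - 1"
    using assms by (auto simp: dynkin_edges_def dynkin_ok_def)
  then show ?thesis by blast
next
  case TypeE
  then have "dynkin_edges T n = path_edges (n - 1) \<union> {{2, n - 1}}" "2 < n - 1"
    using assms by (auto simp: dynkin_edges_def dynkin_ok_def)
  then show ?thesis by blast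
qed

lemma dynkin_quiver_potential:
  assumes "dynkin_quiver I Arr src tgt"
  shows "\<exists>c :: 'v \<Rightarrow> complex. \<forall>a\<in>Arr. c (tgt a) = c (src a) + 1/2"
proof -
  obtain T n \<phi> where ok: "dynkin_ok T n"
    and bij: "bij_betw (\<lambda>a. {\<phi> (src a), \<phi> (tgt a)}) Arr (dynkin_edges T n)"
    using assms unfolding dynkin_quiver_def by blast
  define edge where "edge a = {\<phi> (src a), \<phi> (tgt a)}" for a
  have bij: "bij_betw edge Arr (dynkin_edges T n)"
    using bij by (simp add: edge_def[abs_def])
  obtain m X k where E: "dynkin_edges T n = path_edges m \<union> X" and X: "X = {} \<or> (X = {{k, m}} \<and> k < m)"
    using dynkin_edges_shape[OF ok] by blast
  define ori where "ori e = \<phi> (src (inv_into Arr edge e))" for e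
  obtain g :: "nat \<Rightarrow> complex"
    where g: "\<And>i j. {i, j} \<in> path_edges m \<union> X \<Longrightarrow> ori {i, j} = i \<Longrightarrow> g j = g i + 1/2"
    using path_with_pendant_potential[OF X, of ori] by blast
  have "g (\<phi> (tgt a)) = g (\<phi> (src a)) + 1/2" if a: "a \<in> Arr" for a
  proof (rule g)
    show "{\<phi> (src a), \<phi> (tgt a)} \<in> path_edges m \<union> X"
      using bij a E by (auto simp: bij_betw_def edge_def)
    have "inv_into Arr edge (edge a) = a"
      using bij a by (simp add: bij_betw_def inv_into_f_f)
    then show "ori {\<phi> (src a), \<phi> (tgt a)} = \<phi> (src a)"
      by (simp add: ori_def edge_def)
  qed
  then show ?thesis by (intro exI[of _ "g \<circ> \<phi>"]) simp
qed

lemma dynkin_quiver_finite_vertices: "dynkin_quiver I Arr src tgt \<Longrightarrow> finite I"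
  unfolding dynkin_quiver_def by (metis bij_betw_finite finite_lessThan)

lemma endv_Nil [simp]: "endv src tgt (v, []) = v"
  by (simp add: endv_def)

lemma endv_Cons: "endv src tgt (v, x # xs) = endv src tgt (dtgt src tgt x, xs)"
  by (simp add: endv_def)

lemma walk_potential_drop:
  assumes pot: "\<forall>a\<in>Arr. c (tgt a) = c (src a) + (1/2 :: complex)"
  shows "\<forall>x\<in>set xs. fst x \<in> Arr \<Longrightarrow> walk src tgt v xs \<Longrightarrow>
    c v - c (endv src tgt (v, xs)) = of_nat (length (filter snd xs)) - of_nat (length xs) / 2"
proof (induction xs arbitrary: v)
  case Nil then show ?case by simp
next
  case (Cons x xs)
  have IH: "c (dtgt src tgt x) - c (endv src tgt (dtgt src tgt x, xs)) =
      of_nat (length (filter snd xs)) - of_nat (length xs) / 2"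
    using Cons by simp
  have step: "c (dsrc src tgt x) - c (dtgt src tgt x) = (if snd x then 1/2 else - 1/2)"
    using pot Cons.prems(1) by (auto simp: dsrc_def dtgt_def)
  have "c v - c (endv src tgt (v, x # xs)) = (c (dsrc src tgt x) - c (dtgt src tgt x)) +
      (c (dtgt src tgt x) - c (endv src tgt (dtgt src tgt x, xs)))"
    using Cons.prems(2) by (simp add: endv_Cons)
  also have "\<dots> = of_nat (length (filter snd (x # xs))) - of_nat (length (x # xs)) / 2"
    unfolding step IH by (cases "snd x") (simp_all add: field_simps)
  finally show ?case .
qed

lemma walk_endv_in:
  assumes "\<forall>a\<in>Arr. src a \<in> I \<and> tgt a \<in> I"
  shows "\<forall>x\<in>set xs. fst x \<in> Arr \<Longrightarrow> walk src tgt v xs \<Longrightarrow> v \<in> I \<Longrightarrow> endv src tgt (v, xs) \<in> I"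
proof (induction xs arbitrary: v)
  case Nil then show ?case by simp
next
  case (Cons x xs)
  have "dtgt src tgt x \<in> I" using Cons assms by (auto simp: dtgt_def)
  then show ?case using Cons by (simp add: endv_Cons)
qed

lemma valid_path_endpoints_in:
  assumes "\<forall>a\<in>Arr. src a \<in> I \<and> tgt a \<in> I" "valid_path I Arr src tgt p"
  shows "fst p \<in> I" "endv src tgt p \<in> I"
  using walk_endv_in[OF assms(1), of "snd p" "fst p"] assms(2) by (auto simp: valid_path_def)

text \<open>For the element c = \<Sum> c v e_v of the path algebra, the inner derivation [c, -] multiplies
  a path from i to j by c i - c j, so its Lie derivative multiplies a basis tensor t by
  pot_drop src tgt c t.\<close>
definition pot_drop :: "('a \<Rightarrow> 'v) \<Rightarrow> ('a \<Rightarrow> 'v) \<Rightarrow> ('v \<Rightarrow> complex) \<Rightarrow> ('v, 'a) path list \<Rightarrow> complex" where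
  "pot_drop src tgt c t = (\<Sum>j<length t. c (fst (t ! j)) - c (endv src tgt (t ! j)))"

lemma star_count_sub_half_tdeg:
  assumes pot: "\<forall>a\<in>Arr. c (tgt a) = c (src a) + (1/2 :: complex)"
    and valid: "\<forall>p\<in>set t. valid_path I Arr src tgt p"
  shows "of_nat (star_count t) - of_nat (tdeg t) / 2 = pot_drop src tgt c t"
proof -
  have "of_nat (star_count t) - of_nat (tdeg t) / 2 = (\<Sum>p\<leftarrow>t. c (fst p) - c (endv src tgt p))"
    using valid
  proof (induction t)
    case Nil then show ?case by (simp add: star_count_def tdeg_def)
  next
    case (Cons p t)
    have "c (fst p) - c (endv src tgt p) =
        of_nat (length (filter snd (snd p))) - of_nat (length (snd p)) / 2"
      using walk_potential_drop[where c=c and Arr=Arr and src=src and tgt=tgt, OF pot, of "snd p" "fst p"] Cons.prems by (simp add: valid_path_def)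
    then show ?case using Cons by (simp add: star_count_def tdeg_def algebra_simps add_divide_distrib)
  qed
  also have "\<dots> = pot_drop src tgt c t"
    unfolding pot_drop_def by (simp add: sum_list_sum_nth atLeast0LessThan)
  finally show ?thesis .
qed

section \<open>Faces of a basis tensor\<close>

definition insert_unit :: "('v, 'a) path list \<Rightarrow> nat \<Rightarrow> 'v \<Rightarrow> ('v, 'a) path list" where
  "insert_unit t k v = take k t @ (v, []) # drop k t"

definition pconcat :: "('v, 'a) path \<Rightarrow> ('v, 'a) path \<Rightarrow> ('v, 'a) path" where
  "pconcat p q = (fst p, snd p @ snd q)"

definition face_sign :: "('a \<Rightarrow> 'v) \<Rightarrow> ('a \<Rightarrow> 'v) \<Rightarrow> ('v, 'a) path list \<Rightarrow> nat \<Rightarrow> complex" where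
  "face_sign src tgt s j = (if j < length s - 1 then (if endv src tgt (s ! j) = fst (s ! Suc j) then (-1) ^ j else 0)
     else if 2 \<le> length s \<and> endv src tgt (last s) = fst (hd s) then (-1) ^ (length s - 1) else 0)"

definition face :: "('v, 'a) path list \<Rightarrow> nat \<Rightarrow> ('v, 'a) path list" where
  "face s j = (if j < length s - 1 then take j s @ pconcat (s ! j) (s ! Suc j) # drop (Suc (Suc j)) s
     else pconcat (last s) (hd s) # butlast (tl s))"

lemma bterm_eq_face_sum:
  assumes "t \<noteq> []"
  shows "bterm src tgt t u = (\<Sum>j<length t. face_sign src tgt t j * unit_vec (face t j) u)"
proof -
  have e: "{..<length t} = insert (length t - 1) {..<length t - 1}" using assms by auto
  have 1: "(\<Sum>j<length t - 1. (case pcat src tgt (t ! j) (t ! Suc j) of None \<Rightarrow> 0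
          | Some r \<Rightarrow> if u = take j t @ r # drop (Suc (Suc j)) t then (-1) ^ j else 0))
       = (\<Sum>j<length t - 1. face_sign src tgt t j * unit_vec (face t j) u)"
    by (rule sum.cong) (auto simp: pcat_def face_sign_def face_def unit_vec_def pconcat_def)
  have 2: "(if 2 \<le> length t then (case pcat src tgt (last t) (hd t) of None \<Rightarrow> 0
          | Some r \<Rightarrow> if u = r # butlast (tl t) then (-1) ^ (length t - 1) else 0) else 0)
       = face_sign src tgt t (length t - 1) * unit_vec (face t (length t - 1)) u"
    by (auto simp: pcat_def face_sign_def face_def unit_vec_def pconcat_def)
  show ?thesis unfolding bterm_def 1 2 e by (simp add: add.commute)
qed

lemma length_insert_unit[simp]: "k \<le> length t \<Longrightarrow> length (insert_unit t k v) = Suc (length t)"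
  by (simp add: insert_unit_def)

lemma nth_insert_unit: "k \<le> length t \<Longrightarrow> insert_unit t k v ! i = (if i < k then t ! i else if i = k then (v, []) else t ! (i - 1))"
  by (auto simp: insert_unit_def nth_append min_def Suc_diff_Suc)

lemma length_face: "2 \<le> length t \<Longrightarrow> length (face t j) = length t - 1"
  by (auto simp: face_def)

lemma nth_face_merge: "j < length t - 1 \<Longrightarrow>
   face t j ! i = (if i < j then t ! i else if i = j then pconcat (t ! j) (t ! Suc j) else t ! Suc i)"
  by (auto simp: face_def nth_append min_def)

lemma nth_face_wrap: "2 \<le> length t \<Longrightarrow> \<not> j < length t - 1 \<Longrightarrow> i < length t - 1 \<Longrightarrow>
   face t j ! i = (if i = 0 then pconcat (last t) (hd t) else t ! i)"
  by (cases i) (auto simp: face_def nth_butlast nth_tl)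

lemma face_sign_insert_unit_below:
  assumes "Suc j < k" "k \<le> length t"
  shows "face_sign src tgt (insert_unit t k v) j = face_sign src tgt t j"
proof -
  have "insert_unit t k v ! j = t ! j" "insert_unit t k v ! Suc j = t ! Suc j"
    using assms by (auto simp: nth_insert_unit)
  moreover have "j < length t - 1" using assms by simp
  ultimately show ?thesis using assms by (simp add: face_sign_def)
qed

lemma face_insert_unit_below:
  assumes "Suc j < k" "k \<le> length t"
  shows "face (insert_unit t k v) j = insert_unit (face t j) (k - 1) v"
proof -
  have m: "j < length t - 1" using assms by auto
  have lr: "length (face t j) = length t - 1" using assms by (intro length_face) auto
  show ?thesis
  proof (rule nth_equalityI)
    show "length (face (insert_unit t k v) j) = length (insert_unit (face t j) (k - 1) v)"
      using assms lr by (simp add: length_face)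
  next
    fix i assume "i < length (face (insert_unit t k v) j)"
    then have i: "i < length t" using assms by (simp add: length_face)
    have jm: "j < length (insert_unit t k v) - 1" using assms by simp
    show "face (insert_unit t k v) j ! i = insert_unit (face t j) (k - 1) v ! i"
      using assms i m lr
      by (auto simp: nth_face_merge[OF jm] nth_face_merge[OF m] nth_insert_unit)
  qed
qed

lemma face_sign_insert_unit_above:
  assumes "k < j" "j \<le> length t" "1 \<le> k"
  shows "face_sign src tgt (insert_unit t k v) j = - face_sign src tgt t (j - 1)"
proof -
  have k: "k \<le> length t" using assms by simp
  have m2: "2 \<le> length t" using assms by simp
  show ?thesis
  proof (cases "j < length t")
    case True
    have n1: "insert_unit t k v ! j = t ! (j - 1)" "insert_unit t k v ! Suc j = t ! j" using assms True by (auto simp: nth_insert_unit)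
    have pw: "(-1::complex)^j = - ((-1)^(j-1))" using assms by (cases j) auto
    have "j - 1 < length t - 1" using assms True by auto
    then show ?thesis using assms True k
      by (simp add: face_sign_def n1 pw)
  next
    case False
    then have jj: "j = length t" using assms by simp
    have "last (insert_unit t k v) = last t" using assms jj by (auto simp: insert_unit_def)
    moreover have "hd (insert_unit t k v) = hd t" using assms jj
      by (cases t) (auto simp: insert_unit_def)
    ultimately show ?thesis using assms jj m2
      by (cases "length t") (auto simp: face_sign_def)
  qed
qed

lemma face_insert_unit_above:
  assumes "k < j" "j \<le> length t" "1 \<le> k"
  shows "face (insert_unit t k v) j = insert_unit (face t (j - 1)) k v"
proof -
  have k: "k \<le> length t" using assms by simp
  have m2: "2 \<le> length t" using assms by simp
  have lr: "length (face t (j - 1)) = length t - 1" using m2 by (rule length_face)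
  show ?thesis
  proof (rule nth_equalityI)
    show "length (face (insert_unit t k v) j) = length (insert_unit (face t (j - 1)) k v)"
      using assms lr m2 by (simp add: length_face)
    fix i assume "i < length (face (insert_unit t k v) j)"
    then have i: "i < length t" using assms m2 by (simp add: length_face)
    show "face (insert_unit t k v) j ! i = insert_unit (face t (j - 1)) k v ! i"
    proof (cases "j < length t")
      case True
      have jm: "j < length (insert_unit t k v) - 1" using assms True by simp
      obtain j' where j': "j = Suc j'" using assms by (cases j) auto
      have jm': "j' < length t - 1" using assms True j' by simp
      show ?thesis using assms i True lr unfolding j'
        by (auto simp: nth_face_merge[OF jm[unfolded j']] nth_face_merge[OF jm'] nth_insert_unit)
    next
      case False
      then have jj: "j = length t" using assms by simp
      have w1: "\<not> j < length (insert_unit t k v) - 1" using jj assms by simp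
      have w2: "\<not> j - 1 < length t - 1" using jj assms by simp
      have l2: "2 \<le> length (insert_unit t k v)" using assms by simp
      have lt: "last (insert_unit t k v) = last t" using assms jj by (auto simp: insert_unit_def)
      have ht: "hd (insert_unit t k v) = hd t" using assms jj by (cases t) (auto simp: insert_unit_def)
      have il: "i < length (insert_unit t k v) - 1" using i k by simp
      have a: "face (insert_unit t k v) j ! i = (if i = 0 then pconcat (last t) (hd t) else insert_unit t k v ! i)"
        using nth_face_wrap[OF l2 w1 il] lt ht by simp
      have b: "face t (length t - Suc 0) ! x = (if x = 0 then pconcat (last t) (hd t) else t ! x)" if "x < length t - Suc 0" for x
        using nth_face_wrap[OF m2, of "length t - Suc 0" x] that by simp
      have kk: "k \<le> length (face t (j - 1))" using lr assms jj by simp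
      show ?thesis unfolding a nth_insert_unit[OF kk] nth_insert_unit[OF k] using assms i lr jj
        by (auto simp: b)
    qed
  qed
qed

lemma face_insert_unit_merge_left:
  assumes "1 \<le> k" "k \<le> length t"
  shows "face_sign src tgt (insert_unit t k v) (k - 1) * unit_vec (face (insert_unit t k v) (k - 1)) u =
    (if endv src tgt (t ! (k - 1)) = v then (-1) ^ (k - 1) * unit_vec t u else 0)"
proof -
  obtain k' where k: "k = Suc k'" using assms by (cases k) auto
  have kl: "k \<le> length t" using assms by simp
  have m: "k' < length (insert_unit t k v) - 1" using assms k by simp
  have n1: "insert_unit t k v ! k' = t ! k'" "insert_unit t k v ! Suc k' = (v, [])" using assms k by (auto simp: nth_insert_unit)
  have r: "face (insert_unit t k v) k' = t"
  proof (rule nth_equalityI)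
    show "length (face (insert_unit t k v) k') = length t" using assms by (simp add: length_face)
    fix i assume "i < length (face (insert_unit t k v) k')"
    then have i: "i < length t" using assms by (simp add: length_face)
    show "face (insert_unit t k v) k' ! i = t ! i"
      unfolding nth_face_merge[OF m] using i k assms by (auto simp: nth_insert_unit pconcat_def)
  qed
  show ?thesis using m n1 r k by (simp add: face_sign_def)
qed

lemma face_insert_unit_merge_right:
  assumes "1 \<le> k" "k \<le> length t"
  shows "face_sign src tgt (insert_unit t k v) k * unit_vec (face (insert_unit t k v) k) u =
    (if v = fst (t ! (k mod length t)) then (-1) ^ k * unit_vec t u else 0)"
proof (cases "k < length t")
  case True
  have m: "k < length (insert_unit t k v) - 1" using assms True by simp
  have n1: "insert_unit t k v ! k = (v, [])" "insert_unit t k v ! Suc k = t ! k" using assms True by (auto simp: nth_insert_unit)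
  have r: "face (insert_unit t k v) k = t" if v: "v = fst (t ! k)"
  proof (rule nth_equalityI)
    show "length (face (insert_unit t k v) k) = length t" using assms by (simp add: length_face)
    fix i assume "i < length (face (insert_unit t k v) k)"
    then have i: "i < length t" using assms by (simp add: length_face)
    show "face (insert_unit t k v) k ! i = t ! i"
      unfolding nth_face_merge[OF m] using i assms True v by (auto simp: nth_insert_unit pconcat_def)
  qed
  show ?thesis using m n1 r True by (auto simp: face_sign_def)
next
  case False
  then have kk: "k = length t" using assms by simp
  have w: "\<not> k < length (insert_unit t k v) - 1" using kk by simp
  have l2: "2 \<le> length (insert_unit t k v)" using assms by simp
  have lt: "last (insert_unit t k v) = (v, [])" using kk by (simp add: insert_unit_def)
  have ht: "hd (insert_unit t k v) = t ! 0" using assms kk by (cases t) (auto simp: insert_unit_def)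
  have r: "face (insert_unit t k v) k = t" if v: "v = fst (t ! 0)"
  proof (rule nth_equalityI)
    show "length (face (insert_unit t k v) k) = length t" using assms by (simp add: length_face)
    fix i assume "i < length (face (insert_unit t k v) k)"
    then have i: "i < length t" using assms by (simp add: length_face)
    have il: "i < length (insert_unit t k v) - 1" using i assms by simp
    show "face (insert_unit t k v) k ! i = t ! i"
      unfolding nth_face_wrap[OF l2 w il] lt ht using i assms kk v by (auto simp: nth_insert_unit pconcat_def)
  qed
  show ?thesis using w l2 lt ht r kk assms by (auto simp: face_sign_def)
qed

lemma insert_unit_not_Nil: "insert_unit t k v \<noteq> []"
  by (simp add: insert_unit_def)

lemma set_insert_unit: "set (insert_unit t k v) = insert (v, []) (set t)"
  using set_append[of "take k t" "drop k t"] by (simp add: insert_unit_def)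

lemma face_sign_nonzero_length: "face_sign src tgt t j \<noteq> 0 \<Longrightarrow> 2 \<le> length t"
  by (auto simp: face_sign_def split: if_splits)

lemma fin_supp_bterm:
  assumes "t \<noteq> []"
  shows "fin_supp (bterm src tgt t)"
proof -
  have "bterm src tgt t = (\<lambda>u. \<Sum>j<length t. face_sign src tgt t j * unit_vec (face t j) u)"
    by (intro ext bterm_eq_face_sum[OF assms])
  then show ?thesis by (simp add: fin_supp_sum fin_supp_scale fin_supp_unit_vec)
qed

section \<open>The contracting homotopy\<close>

lemma sum_split_around:
  fixes f :: "nat \<Rightarrow> 'b :: comm_monoid_add"
  assumes "1 \<le> k" "k \<le> m"
  shows "(\<Sum>j<Suc m. f j) = (\<Sum>j<k - 1. f j) + f (k - 1) + f k + (\<Sum>j\<in>{Suc k..m}. f j)"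
proof -
  obtain k' where k: "k = Suc k'" using assms by (cases k) auto
  have e: "{..<Suc m} = {..<k'} \<union> ({k'} \<union> ({Suc k'} \<union> {Suc (Suc k')..m}))" using assms k by auto
  have d: "(\<Sum>j\<in>{..<k'} \<union> {Suc (Suc k')..m}. f j) = (\<Sum>j<k'. f j) + (\<Sum>j\<in>{Suc (Suc k')..m}. f j)"
    by (rule sum.union_disjoint) auto
  show ?thesis unfolding e k by (simp add: d algebra_simps)
qed

lemma sum_atLeast_Suc_atMost_pred:
  fixes a b :: nat
  shows "(\<Sum>k\<in>{Suc a..b}. f (k - 1)) = (\<Sum>k\<in>{a..<b}. f k)"
proof -
  have "(\<Sum>k\<in>Suc ` {a..<b}. f (k - 1)) = (\<Sum>k\<in>{a..<b}. f (Suc k - 1))"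
    by (rule sum.reindex[unfolded comp_def]) simp
  then show ?thesis by (simp add: atLeastLessThanSuc_atLeastAtMost image_Suc_atLeastLessThan)
qed

lemma sum_atLeast1_atMost_pred: "(\<Sum>k\<in>{1..m}. f (k - 1)) = (\<Sum>k<(m :: nat). f k)"
  using sum_atLeast_Suc_atMost_pred[where a=0 and b=m and f=f] by (simp add: atLeast0LessThan)

lemma sum_atLeast1_atMost_mod:
  fixes m :: nat
  assumes "1 \<le> m"
  shows "(\<Sum>k\<in>{1..m}. f (k mod m)) = (\<Sum>k<m. f k)"
proof -
  have "{1..m} = insert m {1..<m}" "{..<m} = insert 0 {1..<m}" using assms by auto
  moreover have "(\<Sum>k\<in>{1..<m}. f (k mod m)) = (\<Sum>k\<in>{1..<m}. f k)" by (rule sum.cong) auto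
  ultimately show ?thesis by simp
qed

text \<open>With c = \<Sum> c v e_v, the homotopy H(a_0 \<otimes> \<dots> \<otimes> a_n) =
  \<Sum>_{k=1}^{n+1} (-1)^k a_0 \<otimes> \<dots> \<otimes> a_{k-1} \<otimes> c \<otimes> a_k \<otimes> \<dots> \<otimes> a_n
  satisfies b H + H b = L_{[c,-]}.\<close>
definition htpy_summand :: "'v set \<Rightarrow> ('v \<Rightarrow> complex) \<Rightarrow> nat \<Rightarrow> ('v, 'a) path list \<Rightarrow> ('v, 'a) path list \<Rightarrow> complex" where
  "htpy_summand I c k t u = (\<Sum>v\<in>I. (-1) ^ k * c v * unit_vec (insert_unit t k v) u)"

definition htpy :: "'v set \<Rightarrow> ('v \<Rightarrow> complex) \<Rightarrow> ('v, 'a) path list \<Rightarrow> ('v, 'a) path list \<Rightarrow> complex" where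
  "htpy I c t u = (\<Sum>k\<in>{1..length t}. htpy_summand I c k t u)"

lemma fin_supp_htpy_summand: "finite I \<Longrightarrow> fin_supp (htpy_summand I c k t)"
  by (simp add: htpy_summand_def[abs_def] fin_supp_sum fin_supp_scale fin_supp_unit_vec)

lemma fin_supp_htpy: "finite I \<Longrightarrow> fin_supp (htpy I c t)"
  by (simp add: htpy_def[abs_def] fin_supp_sum fin_supp_htpy_summand)

lemma bterm_insert_unit:
  assumes k: "1 \<le> k" "k \<le> length t"
  shows "bterm src tgt (insert_unit t k v) u =
      (\<Sum>j<k - 1. face_sign src tgt t j * unit_vec (insert_unit (face t j) (k - 1) v) u)
    + ((if endv src tgt (t ! (k - 1)) = v then (-1) ^ (k - 1) * unit_vec t u else 0)
      + (if v = fst (t ! (k mod length t)) then (-1) ^ k * unit_vec t u else 0))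
    - (\<Sum>j\<in>{k..<length t}. face_sign src tgt t j * unit_vec (insert_unit (face t j) k v) u)"
proof -
  define f where "f j = face_sign src tgt (insert_unit t k v) j * unit_vec (face (insert_unit t k v) j) u" for j
  have "bterm src tgt (insert_unit t k v) u = (\<Sum>j<Suc (length t). f j)"
    using bterm_eq_face_sum[OF insert_unit_not_Nil, of src tgt t k v u] k by (simp add: f_def)
  also have "\<dots> = (\<Sum>j<k - 1. f j) + f (k - 1) + f k + (\<Sum>j\<in>{Suc k..length t}. f j)"
    by (rule sum_split_around[OF k])
  also have "(\<Sum>j<k - 1. f j) = (\<Sum>j<k - 1. face_sign src tgt t j * unit_vec (insert_unit (face t j) (k - 1) v) u)"
    by (rule sum.cong[OF refl]) (use k in \<open>simp add: f_def face_sign_insert_unit_below face_insert_unit_below\<close>)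
  also have "f (k - 1) = (if endv src tgt (t ! (k - 1)) = v then (-1) ^ (k - 1) * unit_vec t u else 0)"
    unfolding f_def by (rule face_insert_unit_merge_left[OF k])
  also have "f k = (if v = fst (t ! (k mod length t)) then (-1) ^ k * unit_vec t u else 0)"
    unfolding f_def by (rule face_insert_unit_merge_right[OF k])
  also have "(\<Sum>j\<in>{Suc k..length t}. f j)
      = - (\<Sum>j\<in>{Suc k..length t}. face_sign src tgt t (j - 1) * unit_vec (insert_unit (face t (j - 1)) k v) u)"
    unfolding sum_negf[symmetric]
    by (rule sum.cong[OF refl]) (use k in \<open>simp add: f_def face_sign_insert_unit_above face_insert_unit_above\<close>)
  also have "\<dots> = - (\<Sum>j\<in>{k..<length t}. face_sign src tgt t j * unit_vec (insert_unit (face t j) k v) u)"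
    using sum_atLeast_Suc_atMost_pred[where a=k and b="length t"
        and f="\<lambda>j. face_sign src tgt t j * unit_vec (insert_unit (face t j) k v) u"] by simp
  finally show ?thesis by simp
qed

lemma htpy_summand_bterm_diagonal:
  assumes "finite I" and k: "1 \<le> k" "k \<le> length t"
    and ends: "endv src tgt (t ! (k - 1)) \<in> I" "fst (t ! (k mod length t)) \<in> I"
  shows "(\<Sum>v\<in>I. (-1) ^ k * c v *
      ((if endv src tgt (t ! (k - 1)) = v then (-1) ^ (k - 1) * unit_vec t u else 0)
      + (if v = fst (t ! (k mod length t)) then (-1) ^ k * unit_vec t u else 0)))
    = (c (fst (t ! (k mod length t))) - c (endv src tgt (t ! (k - 1)))) * unit_vec t u"
proof -
  have sign: "(-1 :: complex) ^ k * (-1) ^ (k - 1) = -1"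
    using k by (cases k) (auto simp: power_add[symmetric] simp del: power_Suc)
  have square: "(-1 :: complex) ^ k * (-1) ^ k = 1"
    by (simp add: power_mult_distrib[symmetric])
  have delta: "(\<Sum>v\<in>I. f v * (if e = v then Y else 0)) = f e * Y"
    "(\<Sum>v\<in>I. f v * (if v = e then Y else 0)) = f e * Y" if "e \<in> I" for f :: "_ \<Rightarrow> complex" and e Y
    using assms(1) that by (simp_all add: if_distrib[of "\<lambda>x. f _ * x"] sum.delta sum.delta' cong: if_cong)
  have "(\<Sum>v\<in>I. (-1) ^ k * c v *
      ((if endv src tgt (t ! (k - 1)) = v then (-1) ^ (k - 1) * unit_vec t u else 0)
      + (if v = fst (t ! (k mod length t)) then (-1) ^ k * unit_vec t u else 0)))
    = (-1) ^ k * c (endv src tgt (t ! (k - 1))) * ((-1) ^ (k - 1) * unit_vec t u)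
      + (-1) ^ k * c (fst (t ! (k mod length t))) * ((-1) ^ k * unit_vec t u)"
    using delta(1)[OF ends(1)] delta(2)[OF ends(2)] by (simp add: distrib_left sum.distrib)
  also have "\<dots> = ((-1) ^ k * (-1) ^ (k - 1)) * c (endv src tgt (t ! (k - 1))) * unit_vec t u
      + ((-1) ^ k * (-1) ^ k) * c (fst (t ! (k mod length t))) * unit_vec t u"
    by (simp only: mult_ac)
  also have "\<dots> = (c (fst (t ! (k mod length t))) - c (endv src tgt (t ! (k - 1)))) * unit_vec t u"
    unfolding sign square by (simp add: algebra_simps)
  finally show ?thesis .
qed

lemma lin_ext_bterm_htpy_summand:
  assumes "finite I" and k: "1 \<le> k" "k \<le> length t"
    and ends: "endv src tgt (t ! (k - 1)) \<in> I" "fst (t ! (k mod length t)) \<in> I"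
  shows "lin_ext (bterm src tgt) (htpy_summand I c k t) u =
      (c (fst (t ! (k mod length t))) - c (endv src tgt (t ! (k - 1)))) * unit_vec t u
    - (\<Sum>j<k - 1. face_sign src tgt t j * htpy_summand I c (k - 1) (face t j) u)
    - (\<Sum>j\<in>{k..<length t}. face_sign src tgt t j * htpy_summand I c k (face t j) u)"
proof -
  have sign: "(-1 :: complex) ^ k = - ((-1) ^ (k - 1))" using k by (cases k) auto
  have split_diff: "(\<Sum>v\<in>I. a v * (x v + d v - y v)) = (\<Sum>v\<in>I. a v * d v) + (\<Sum>v\<in>I. a v * x v) - (\<Sum>v\<in>I. a v * y v)"
    for a x d y :: "_ \<Rightarrow> complex"
    by (simp add: sum.distrib sum_subtractf algebra_simps)
  have "lin_ext (bterm src tgt) (htpy_summand I c k t) u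
      = (\<Sum>v\<in>I. (-1) ^ k * c v * bterm src tgt (insert_unit t k v) u)"
    unfolding htpy_summand_def[abs_def] by (rule lin_ext_sum_unit_vec[OF assms(1)])
  also have "\<dots> = (\<Sum>v\<in>I. (-1) ^ k * c v *
      ((if endv src tgt (t ! (k - 1)) = v then (-1) ^ (k - 1) * unit_vec t u else 0)
      + (if v = fst (t ! (k mod length t)) then (-1) ^ k * unit_vec t u else 0)))
    + (\<Sum>v\<in>I. (-1) ^ k * c v *
      (\<Sum>j<k - 1. face_sign src tgt t j * unit_vec (insert_unit (face t j) (k - 1) v) u))
    - (\<Sum>v\<in>I. (-1) ^ k * c v *
      (\<Sum>j\<in>{k..<length t}. face_sign src tgt t j * unit_vec (insert_unit (face t j) k v) u))"
    unfolding bterm_insert_unit[OF k] by (rule split_diff)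
  also have "(\<Sum>v\<in>I. (-1) ^ k * c v *
      (\<Sum>j<k - 1. face_sign src tgt t j * unit_vec (insert_unit (face t j) (k - 1) v) u))
    = - (\<Sum>j<k - 1. face_sign src tgt t j * htpy_summand I c (k - 1) (face t j) u)"
    unfolding htpy_summand_def sign sum_distrib_left
    by (subst sum.swap) (simp add: sum_negf mult_ac)
  also have "(\<Sum>v\<in>I. (-1) ^ k * c v *
      (\<Sum>j\<in>{k..<length t}. face_sign src tgt t j * unit_vec (insert_unit (face t j) k v) u))
    = (\<Sum>j\<in>{k..<length t}. face_sign src tgt t j * htpy_summand I c k (face t j) u)"
    unfolding htpy_summand_def sum_distrib_left
    by (subst sum.swap) (simp add: mult_ac)
  finally show ?thesis
    by (simp only: htpy_summand_bterm_diagonal[OF assms] diff_conv_add_uminus)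
qed

lemma lin_ext_htpy_bterm:
  assumes "t \<noteq> []"
  shows "lin_ext (htpy I c) (bterm src tgt t) u =
    (\<Sum>k\<in>{1..<length t}. \<Sum>j<length t. face_sign src tgt t j * htpy_summand I c k (face t j) u)"
proof -
  have "bterm src tgt t = (\<lambda>x. \<Sum>j<length t. face_sign src tgt t j * unit_vec (face t j) x)"
    by (intro ext bterm_eq_face_sum[OF assms])
  then have "lin_ext (htpy I c) (bterm src tgt t) u = (\<Sum>j<length t. face_sign src tgt t j * htpy I c (face t j) u)"
    by (simp add: lin_ext_sum_unit_vec)
  also have "\<dots> = (\<Sum>j<length t. \<Sum>k\<in>{1..<length t}. face_sign src tgt t j * htpy_summand I c k (face t j) u)"
  proof (rule sum.cong[OF refl])
    fix j
    show "face_sign src tgt t j * htpy I c (face t j) u =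
        (\<Sum>k\<in>{1..<length t}. face_sign src tgt t j * htpy_summand I c k (face t j) u)"
    proof (cases "face_sign src tgt t j = 0")
      case False
      then have "{1..length (face t j)} = {1..<length t}"
        using face_sign_nonzero_length length_face by fastforce
      then show ?thesis by (simp add: htpy_def sum_distrib_left)
    qed simp
  qed
  also have "\<dots> = (\<Sum>k\<in>{1..<length t}. \<Sum>j<length t. face_sign src tgt t j * htpy_summand I c k (face t j) u)"
    by (rule sum.swap)
  finally show ?thesis .
qed

lemma htpy_formula:
  assumes I: "finite I" and t: "t \<noteq> []"
    and ends: "\<forall>p\<in>set t. fst p \<in> I \<and> endv src tgt p \<in> I"
  shows "lin_ext (bterm src tgt) (htpy I c t) u + lin_ext (htpy I c) (bterm src tgt t) u
    = pot_drop src tgt c t * unit_vec t u"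
proof -
  define m where "m = length t"
  define F where "F k j = face_sign src tgt t j * htpy_summand I c k (face t j) u" for k j
  have m: "1 \<le> m" using t by (simp add: m_def Suc_le_eq)
  have ends': "endv src tgt (t ! (k - 1)) \<in> I" "fst (t ! (k mod length t)) \<in> I"
    if "1 \<le> k" "k \<le> length t" for k
  proof -
    have "k - 1 < length t" "k mod length t < length t" using that t by auto
    then have "t ! (k - 1) \<in> set t" "t ! (k mod length t) \<in> set t" by simp_all
    then show "endv src tgt (t ! (k - 1)) \<in> I" "fst (t ! (k mod length t)) \<in> I"
      using ends by auto
  qed
  have "lin_ext (bterm src tgt) (htpy I c t) u = (\<Sum>k\<in>{1..m}. lin_ext (bterm src tgt) (htpy_summand I c k t) u)"
    unfolding htpy_def[abs_def] m_def by (rule lin_ext_sum) (simp_all add: I fin_supp_htpy_summand)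
  also have "\<dots> = (\<Sum>k\<in>{1..m}. (c (fst (t ! (k mod m))) - c (endv src tgt (t ! (k - 1)))) * unit_vec t u
      - (\<Sum>j<k - 1. F (k - 1) j) - (\<Sum>j\<in>{k..<m}. F k j))"
  proof (rule sum.cong[OF refl])
    fix k assume "k \<in> {1..m}"
    then have k: "1 \<le> k" "k \<le> length t" by (auto simp: m_def)
    show "lin_ext (bterm src tgt) (htpy_summand I c k t) u =
        (c (fst (t ! (k mod m))) - c (endv src tgt (t ! (k - 1)))) * unit_vec t u
        - (\<Sum>j<k - 1. F (k - 1) j) - (\<Sum>j\<in>{k..<m}. F k j)"
      unfolding lin_ext_bterm_htpy_summand[OF I k ends'[OF k]] F_def m_def ..
  qed
  also have "\<dots> = pot_drop src tgt c t * unit_vec t u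
      - (\<Sum>k\<in>{1..<m}. \<Sum>j<k. F k j) - (\<Sum>k\<in>{1..<m}. \<Sum>j\<in>{k..<m}. F k j)"
  proof -
    have "(\<Sum>k\<in>{1..m}. (c (fst (t ! (k mod m))) - c (endv src tgt (t ! (k - 1)))) * unit_vec t u)
        = pot_drop src tgt c t * unit_vec t u"
      using sum_atLeast1_atMost_mod[OF m, of "\<lambda>k. c (fst (t ! k))"]
        sum_atLeast1_atMost_pred[of "\<lambda>k. c (endv src tgt (t ! k))" m]
      by (simp add: pot_drop_def m_def sum_subtractf sum_distrib_right[symmetric] left_diff_distrib)
    moreover have "(\<Sum>k\<in>{1..m}. \<Sum>j<k - 1. F (k - 1) j) = (\<Sum>k\<in>{1..<m}. \<Sum>j<k. F k j)"
    proof -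
      have "{..<m} = insert 0 {1..<m}" using m by auto
      then show ?thesis using sum_atLeast1_atMost_pred[of "\<lambda>k. \<Sum>j<k. F k j" m] by simp
    qed
    moreover have "(\<Sum>k\<in>{1..m}. \<Sum>j\<in>{k..<m}. F k j) = (\<Sum>k\<in>{1..<m}. \<Sum>j\<in>{k..<m}. F k j)"
    proof -
      have "{1..m} = insert m {1..<m}" using m by auto
      then show ?thesis by simp
    qed
    ultimately show ?thesis by (simp add: sum_subtractf)
  qed
  moreover have "lin_ext (htpy I c) (bterm src tgt t) u
      = (\<Sum>k\<in>{1..<m}. (\<Sum>j<k. F k j) + (\<Sum>j\<in>{k..<m}. F k j))"
  proof -
    have "(\<Sum>j<m. F k j) = (\<Sum>j<k. F k j) + (\<Sum>j\<in>{k..<m}. F k j)" if "k < m" for k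
      using that by (subst sum.union_disjoint[symmetric]) (auto intro: sum.cong)
    then show ?thesis
      unfolding lin_ext_htpy_bterm[OF t] F_def m_def by (intro sum.cong) auto
  qed
  ultimately show ?thesis by (simp add: sum.distrib)
qed

section \<open>Relation tensors\<close>

lemma valid_path_unit: "v \<in> I \<Longrightarrow> valid_path I Arr src tgt (v, [])"
  by (simp add: valid_path_def)

lemma fin_supp_option_unit: "fin_supp (\<lambda>x. case X of None \<Rightarrow> 0 | Some r \<Rightarrow> if x = h r then 1 else 0)"
  by (cases X) (auto simp: fin_supp_def)

lemma lin_ext_option_unit:
  "lin_ext F (\<lambda>x. case X of None \<Rightarrow> 0 | Some r \<Rightarrow> if x = h r then 1 else 0) u
    = (case X of None \<Rightarrow> 0 | Some r \<Rightarrow> F (h r) u)"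
proof (cases X)
  case None then show ?thesis by (simp add: lin_ext_zero)
next
  case (Some r)
  have "(\<lambda>x. if x = h r then 1 else 0) = unit_vec (h r)" by (rule ext) (simp add: unit_vec_def)
  then show ?thesis using Some by (simp add: lin_ext_unit_vec)
qed

lemma fin_supp_rel_gen: "fin_supp (rel_gen Arr src tgt t j p q)"
proof (cases "finite Arr")
  case True
  then show ?thesis
    unfolding rel_gen_def by (intro fin_supp_sum fin_supp_diff fin_supp_option_unit)
qed (simp add: rel_gen_def fin_supp_def)

lemma insert_unit_list_update:
  assumes "k \<le> length t" "j < length t"
  shows "insert_unit (t[j := r]) k v = (insert_unit t k v)[(if j < k then j else Suc j) := r]"
proof (rule nth_equalityI)
  show "length (insert_unit (t[j := r]) k v) = length ((insert_unit t k v)[(if j < k then j else Suc j) := r])"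
    using assms by simp
  fix i assume "i < length (insert_unit (t[j := r]) k v)"
  then have i: "i < Suc (length t)" using assms by simp
  have k: "k \<le> length (t[j := r])" using assms by simp
  show "insert_unit (t[j := r]) k v ! i = (insert_unit t k v)[(if j < k then j else Suc j) := r] ! i"
    unfolding nth_insert_unit[OF k] using assms i by (auto simp: nth_list_update nth_insert_unit)
qed

lemma htpy_option_list_update:
  assumes "j < length t"
  shows "(case P of None \<Rightarrow> 0 | Some r \<Rightarrow> htpy I c (t[j := r]) u) =
    (\<Sum>k\<in>{1..length t}. \<Sum>v\<in>I. (-1) ^ k * c v *
       (case P of None \<Rightarrow> 0 | Some r \<Rightarrow> if u = (insert_unit t k v)[(if j < k then j else Suc j) := r] then 1 else 0))"
proof (cases P)
  case (Some r)
  show ?thesis unfolding Some htpy_def htpy_summand_def option.case length_list_update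
    by (intro sum.cong refl) (use assms in \<open>auto simp: insert_unit_list_update unit_vec_def\<close>)
qed simp

lemma lin_ext_htpy_rel_gen:
  assumes Arr: "finite Arr" and j: "j < length t"
  shows "lin_ext (htpy I c) (rel_gen Arr src tgt t j p q) u =
    (\<Sum>k\<in>{1..length t}. \<Sum>v\<in>I. (-1) ^ k * c v *
       rel_gen Arr src tgt (insert_unit t k v) (if j < k then j else Suc j) p q u)"
proof -
  define P1 where "P1 a = pcat3 src tgt p (src a, [(a, False), (a, True)]) q" for a
  define P2 where "P2 a = pcat3 src tgt p (tgt a, [(a, True), (a, False)]) q" for a
  define A where "A P x = (case P of None \<Rightarrow> 0 | Some r \<Rightarrow> if x = t[j := r] then 1 else (0 :: complex))" for P x
  define B where "B P k v = (case P of None \<Rightarrow> 0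
      | Some r \<Rightarrow> if u = (insert_unit t k v)[(if j < k then j else Suc j) := r] then 1 else (0 :: complex))" for P k v
  have "rel_gen Arr src tgt t j p q = (\<lambda>x. \<Sum>a\<in>Arr. A (P1 a) x - A (P2 a) x)"
    by (simp add: rel_gen_def A_def P1_def P2_def)
  then have "lin_ext (htpy I c) (rel_gen Arr src tgt t j p q) u
      = (\<Sum>a\<in>Arr. lin_ext (htpy I c) (\<lambda>x. A (P1 a) x - A (P2 a) x) u)"
    by (simp add: lin_ext_sum[OF Arr] A_def fin_supp_diff fin_supp_option_unit)
  also have "\<dots> = (\<Sum>a\<in>Arr. (\<Sum>k\<in>{1..length t}. \<Sum>v\<in>I. (-1) ^ k * c v * B (P1 a) k v)
      - (\<Sum>k\<in>{1..length t}. \<Sum>v\<in>I. (-1) ^ k * c v * B (P2 a) k v))"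
    unfolding A_def B_def
    by (simp add: lin_ext_diff fin_supp_option_unit lin_ext_option_unit htpy_option_list_update[OF j])
  also have "\<dots> = (\<Sum>k\<in>{1..length t}. \<Sum>v\<in>I. (-1) ^ k * c v * (\<Sum>a\<in>Arr. B (P1 a) k v - B (P2 a) k v))"
    by (simp add: sum_subtractf sum_distrib_left right_diff_distrib sum.swap[of _ Arr])
  also have "\<dots> = (\<Sum>k\<in>{1..length t}. \<Sum>v\<in>I. (-1) ^ k * c v *
      rel_gen Arr src tgt (insert_unit t k v) (if j < k then j else Suc j) p q u)"
    unfolding B_def rel_gen_def P1_def P2_def by simp
  finally show ?thesis .
qed

lemma lin_ext_htpy_rel_span:
  assumes g: "g \<in> rel_span I Arr src tgt n"
  shows "in_span (rel_span I Arr src tgt (Suc n)) (lin_ext (htpy I c) g)"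
proof -
  obtain t j p q where g_def: "g = rel_gen Arr src tgt t j p q" and t: "length t = Suc n" and j: "j \<le> n"
    and valid: "\<forall>x\<in>set t. valid_path I Arr src tgt x" "valid_path I Arr src tgt p" "valid_path I Arr src tgt q"
    using g unfolding rel_span_def by blast
  show ?thesis
  proof (cases "finite Arr \<and> finite I")
    case False
    then have "lin_ext (htpy I c) g = (\<lambda>_. 0)"
      by (auto simp: g_def rel_gen_def htpy_def htpy_summand_def lin_ext_def)
    then show ?thesis by (simp add: in_span_zero)
  next
    case True
    define j' where "j' k = (if j < k then j else Suc j)" for k
    have gen: "rel_gen Arr src tgt (insert_unit t k v) (j' k) p q \<in> rel_span I Arr src tgt (Suc n)"
      if "k \<in> {1..length t}" "v \<in> I" for k v
    proof -
      have "length (insert_unit t k v) = Suc (Suc n)" "j' k \<le> Suc n"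
        "\<forall>x\<in>set (insert_unit t k v). valid_path I Arr src tgt x"
        using that t j valid by (auto simp: j'_def set_insert_unit valid_path_unit)
      then show ?thesis unfolding rel_span_def using valid by blast
    qed
    have "in_span (rel_span I Arr src tgt (Suc n)) (\<lambda>u. \<Sum>k\<in>{1..length t}. 1 *
        (\<Sum>v\<in>I. (-1) ^ k * c v * rel_gen Arr src tgt (insert_unit t k v) (j' k) p q u))"
      using True by (intro in_span_sum in_span_gen gen) auto
    moreover have "lin_ext (htpy I c) g = (\<lambda>u. \<Sum>k\<in>{1..length t}. 1 *
        (\<Sum>v\<in>I. (-1) ^ k * c v * rel_gen Arr src tgt (insert_unit t k v) (j' k) p q u))"
      using t j True by (intro ext) (simp add: g_def lin_ext_htpy_rel_gen j'_def)
    ultimately show ?thesis by simp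
  qed
qed

lemma is_chain_lin_ext_htpy:
  assumes I: "finite I" and z: "is_chain I Arr src tgt n z"
  shows "is_chain I Arr src tgt (Suc n) (lin_ext (htpy I c) z)"
proof -
  define Z where "Z = {t. z t \<noteq> 0}"
  have "{u. lin_ext (htpy I c) z u \<noteq> 0} \<subseteq> (\<Union>t\<in>Z. \<Union>k\<in>{1..length t}. \<Union>v\<in>I. {insert_unit t k v})"
  proof
    fix u assume "u \<in> {u. lin_ext (htpy I c) z u \<noteq> 0}"
    then have "(\<Sum>t\<in>Z. z t * htpy I c t u) \<noteq> 0" by (simp add: lin_ext_def Z_def)
    then obtain t where t: "t \<in> Z" "htpy I c t u \<noteq> 0"
      using sum.not_neutral_contains_not_neutral[of "\<lambda>t. z t * htpy I c t u" Z] by auto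
    then obtain k where k: "k \<in> {1..length t}" "htpy_summand I c k t u \<noteq> 0"
      using sum.not_neutral_contains_not_neutral[of "\<lambda>k. htpy_summand I c k t u" "{1..length t}"]
      by (auto simp: htpy_def)
    then obtain v where v: "v \<in> I" "unit_vec (insert_unit t k v) u \<noteq> 0"
      using sum.not_neutral_contains_not_neutral[of "\<lambda>v. (-1) ^ k * c v * unit_vec (insert_unit t k v) u" I]
      by (auto simp: htpy_summand_def)
    then have "u = insert_unit t k v" by (simp add: unit_vec_def split: if_splits)
    then show "u \<in> (\<Union>t\<in>Z. \<Union>k\<in>{1..length t}. \<Union>v\<in>I. {insert_unit t k v})"
      using t(1) k(1) v(1) by blast
  qed
  moreover have "finite Z" using z by (simp add: is_chain_def Z_def)
  moreover have "length t = Suc n" "\<forall>p\<in>set t. valid_path I Arr src tgt p" if "t \<in> Z" for t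
    using z that by (auto simp: is_chain_def Z_def)
  ultimately show ?thesis
    unfolding is_chain_def using I
    by (intro conjI allI impI; (elim finite_subset)?; force simp: set_insert_unit valid_path_unit)
qed

lemma hbnd_htpy_add_htpy_hbnd:
  assumes I: "finite I" and ends: "\<forall>a\<in>Arr. src a \<in> I \<and> tgt a \<in> I"
    and z: "is_chain I Arr src tgt n z"
  shows "hbnd src tgt (lin_ext (htpy I c) z) u + lin_ext (htpy I c) (hbnd src tgt z) u
    = pot_drop src tgt c u * z u"
proof -
  define Z where "Z = {t. z t \<noteq> 0}"
  have Z: "finite Z" using z by (simp add: is_chain_def Z_def)
  have t: "t \<noteq> []" "\<forall>p\<in>set t. fst p \<in> I \<and> endv src tgt p \<in> I" if "t \<in> Z" for t
    using z that valid_path_endpoints_in[OF ends] by (auto simp: is_chain_def Z_def)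
  have "hbnd src tgt (lin_ext (htpy I c) z) u = (\<Sum>t\<in>Z. z t * lin_ext (bterm src tgt) (htpy I c t) u)"
    unfolding hbnd_eq_lin_ext lin_ext_def[of "htpy I c"] Z_def[symmetric]
    by (simp add: lin_ext_sum[OF Z] fin_supp_scale fin_supp_htpy[OF I] lin_ext_scale)
  moreover have "lin_ext (htpy I c) (hbnd src tgt z) u = (\<Sum>t\<in>Z. z t * lin_ext (htpy I c) (bterm src tgt t) u)"
    unfolding hbnd_def Z_def[symmetric]
    by (simp add: lin_ext_sum[OF Z] fin_supp_scale fin_supp_bterm t lin_ext_scale)
  ultimately have "hbnd src tgt (lin_ext (htpy I c) z) u + lin_ext (htpy I c) (hbnd src tgt z) u
      = (\<Sum>t\<in>Z. z t * (pot_drop src tgt c t * unit_vec t u))"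
    by (simp add: sum.distrib[symmetric] distrib_left[symmetric] htpy_formula[OF I t])
  also have "\<dots> = pot_drop src tgt c u * z u"
    using Z by (cases "u \<in> Z") (auto simp: unit_vec_def Z_def if_distrib cong: if_cong)
  finally show ?thesis .
qed

lemma lie_D_sub_half_degree:
  assumes pot: "\<forall>a\<in>Arr. c (tgt a) = c (src a) + (1/2 :: complex)"
    and z: "is_chain I Arr src tgt n z" and d: "homog d z"
  shows "lie_D z u - of_nat d / 2 * z u = pot_drop src tgt c u * z u"
proof (cases "z u = 0")
  case False
  then have "tdeg u = d" "\<forall>p\<in>set u. valid_path I Arr src tgt p"
    using z d by (auto simp: homog_def is_chain_def)
  then show ?thesis
    using star_count_sub_half_tdeg[where Arr=Arr and src=src and tgt=tgt, OF pot, of u I]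
    by (simp add: lie_D_def) (simp add: algebra_simps)
qed (simp add: lie_D_def)

lemma lin_ext_htpy_hbnd_in_rel_span:
  assumes z: "is_chain I Arr src tgt n z"
    and cycle: "n = 0 \<or> in_span (rel_span I Arr src tgt (n - 1)) (hbnd src tgt z)"
  shows "in_span (rel_span I Arr src tgt n) (lin_ext (htpy I c) (hbnd src tgt z))"
proof (cases "n = 0")
  case True
  then have "hbnd src tgt z = (\<lambda>_. 0)"
    using z by (intro ext) (auto simp: hbnd_def bterm_def is_chain_def intro!: sum.neutral)
  then have "lin_ext (htpy I c) (hbnd src tgt z) = (\<lambda>_. 0)"
    by (simp add: lin_ext_zero[abs_def])
  then show ?thesis by (simp add: in_span_zero)
next
  case False
  then obtain S a where S: "finite S" "S \<subseteq> rel_span I Arr src tgt (n - 1)"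
    and b: "hbnd src tgt z = (\<lambda>u. \<Sum>g\<in>S. a g * g u)"
    using cycle unfolding in_span_def by blast
  have "fin_supp g" if "g \<in> S" for g
    using S(2) that by (auto simp: rel_span_def fin_supp_rel_gen)
  then have "lin_ext (htpy I c) (hbnd src tgt z) = (\<lambda>u. \<Sum>g\<in>S. a g * lin_ext (htpy I c) g u)"
    unfolding b by (intro ext) (simp add: lin_ext_sum[OF S(1)] fin_supp_scale lin_ext_scale)
  moreover have "in_span (rel_span I Arr src tgt (Suc (n - 1))) (\<lambda>u. \<Sum>g\<in>S. a g * lin_ext (htpy I c) g u)"
    using S by (intro in_span_sum lin_ext_htpy_rel_span) auto
  ultimately show ?thesis using False by simp
qed

theorem mainTheorem1:
  fixes I :: "'v set" and Arr :: "'a set" and src tgt :: "'a \<Rightarrow> 'v"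
    and n d :: nat and z :: "('v, 'a) chain"
  assumes "dynkin_quiver I Arr src tgt"
    and "is_chain I Arr src tgt n z"
    and "homog d z"
    and "n = 0 \<or> in_span (rel_span I Arr src tgt (n - 1)) (hbnd src tgt z)"
  shows "\<exists>w. is_chain I Arr src tgt (Suc n) w \<and>
           in_span (rel_span I Arr src tgt n)
             (\<lambda>u. lie_D z u - (of_nat d / 2) * z u - hbnd src tgt w u)"
proof -
  obtain c :: "'v \<Rightarrow> complex" where pot: "\<forall>a\<in>Arr. c (tgt a) = c (src a) + 1/2"
    using dynkin_quiver_potential[OF assms(1)] by blast
  have I: "finite I" using dynkin_quiver_finite_vertices[OF assms(1)] .
  have ends: "\<forall>a\<in>Arr. src a \<in> I \<and> tgt a \<in> I" using assms(1) by (simp add: dynkin_quiver_def)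
  define w where "w = lin_ext (htpy I c) z"
  have "lie_D z u - of_nat d / 2 * z u - hbnd src tgt w u = lin_ext (htpy I c) (hbnd src tgt z) u" for u
    using lie_D_sub_half_degree[OF pot assms(2,3)] hbnd_htpy_add_htpy_hbnd[OF I ends assms(2), of c u]
    by (simp add: w_def algebra_simps)
  then have "in_span (rel_span I Arr src tgt n) (\<lambda>u. lie_D z u - of_nat d / 2 * z u - hbnd src tgt w u)"
    using lin_ext_htpy_hbnd_in_rel_span[OF assms(2,4)] by (simp only: ext)
  moreover have "is_chain I Arr src tgt (Suc n) w"
    unfolding w_def by (rule is_chain_lin_ext_htpy[OF I assms(2)])
  ultimately show ?thesis by blast
qed

end
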